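(* Let $F:\mathbb{R}^n\rightrightarrows\mathbb{R}^n$ be continuous with $F(x)$ nonempty, compact and convex for all $x$, and consider $\Sigma:\dot x\in F(x)$. Let $O\subset\mathbb{R}^n$ be open and $B:\mathbb{R}^n\to\mathbb{R}$ continuously differentiable. If along each (not necessarily maximal) solution $\phi$ of $\Sigma$ with $\phi(\mathrm{dom}\,\phi)\subset O$ the map $t\mapsto B(\phi(t))$ is nonincreasing, then $$\langle\nabla B(x),\eta\rangle\le0\qquad\forall\eta\in F(x),\ \forall x\in O.$$
   Context: Continuity of a set-valued map means upper and lower semicontinuity. A solution of $\Sigma$ is a locally absolutely continuous function $\phi$ on an interval containing $0$ with $\dot\phi(t)\in F(\phi(t))$ for almost all $t\in\mathrm{dom}\,\phi$. *)

theory Defs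
  imports "HOL-Analysis.Analysis"
begin

definition absolutely_continuous_on :: "real set \<Rightarrow> (real \<Rightarrow> 'a::real_normed_vector) \<Rightarrow> bool" where
  "absolutely_continuous_on S f \<longleftrightarrow>
     (\<forall>e>0. \<exists>d>0. \<forall>D. finite D \<and> (\<forall>(u,v)\<in>D. u \<le> v \<and> {u..v} \<subseteq> S) \<and>
        (\<forall>p\<in>D. \<forall>q\<in>D. p \<noteq> q \<longrightarrow> {fst p<..<snd p} \<inter> {fst q<..<snd q} = {}) \<and>
        (\<Sum>(u,v)\<in>D. v - u) < d
        \<longrightarrow> (\<Sum>(u,v)\<in>D. norm (f v - f u)) < e)"

definition locally_absolutely_continuous_on :: "real set \<Rightarrow> (real \<Rightarrow> 'a::real_normed_vector) \<Rightarrow> bool" where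
  "locally_absolutely_continuous_on I f \<longleftrightarrow>
     (\<forall>a b. {a..b} \<subseteq> I \<longrightarrow> absolutely_continuous_on {a..b} f)"

definition upper_semicontinuous_map :: "('a::metric_space \<Rightarrow> 'b::topological_space set) \<Rightarrow> bool" where
  "upper_semicontinuous_map F \<longleftrightarrow>
     (\<forall>x U. open U \<and> F x \<subseteq> U \<longrightarrow> (\<exists>d>0. \<forall>y. dist y x < d \<longrightarrow> F y \<subseteq> U))"

definition lower_semicontinuous_map :: "('a::metric_space \<Rightarrow> 'b::topological_space set) \<Rightarrow> bool" where
  "lower_semicontinuous_map F \<longleftrightarrow>
     (\<forall>x U. open U \<and> F x \<inter> U \<noteq> {} \<longrightarrow> (\<exists>d>0. \<forall>y. dist y x < d \<longrightarrow> F y \<inter> U \<noteq> {}))"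

definition continuous_set_valued_map :: "('a::metric_space \<Rightarrow> 'b::topological_space set) \<Rightarrow> bool" where
  "continuous_set_valued_map F \<longleftrightarrow> upper_semicontinuous_map F \<and> lower_semicontinuous_map F"

definition is_solution :: "('a::euclidean_space \<Rightarrow> 'a set) \<Rightarrow> real set \<Rightarrow> (real \<Rightarrow> 'a) \<Rightarrow> bool" where
  "is_solution F I \<phi> \<longleftrightarrow>
     is_interval I \<and> 0 \<in> I \<and> locally_absolutely_continuous_on I \<phi> \<and>
     (AE t in lebesgue. t \<in> I \<longrightarrow> (\<exists>v. (\<phi> has_vector_derivative v) (at t) \<and> v \<in> F (\<phi> t)))"

end

theory Submission
  imports Defs "HOL-Complex_Analysis.Great_Picard"
begin

text \<open>Suppose \<open>\<nabla>B(x) \<cdot> \<eta> > 0\<close> for some \<open>x \<in> O\<close> and \<open>\<eta> \<in> F(x)\<close>. Projecting \<open>\<eta>\<close> onto the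
  closed convex sets \<open>F(y)\<close> gives a continuous selection \<open>s\<close> of \<open>F\<close> with \<open>s(x) = \<eta>\<close>, so
  \<open>\<nabla>B \<cdot> s > 0\<close> on a ball around \<open>x\<close> inside \<open>O\<close>. By Peano's theorem the ODE \<open>\<dot>y = s(y)\<close>
  has a solution starting at \<open>x\<close> and staying in that ball for a short time; it solves the
  inclusion, and \<open>B\<close> strictly increases along it.\<close>

section \<open>Euler polygons\<close>

definition ramp :: "real \<Rightarrow> real \<Rightarrow> real \<Rightarrow> real" where
  "ramp h a t = max 0 (min h (t - a))"

definition euler_node :: "('a::real_vector \<Rightarrow> 'a) \<Rightarrow> real \<Rightarrow> 'a \<Rightarrow> nat \<Rightarrow> 'a" where
  "euler_node f h x j = ((\<lambda>z. z + h *\<^sub>R f z) ^^ j) x"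

text \<open>\<open>ramp h (i * h) t\<close> is the time spent on the \<open>i\<close>-th step up to time \<open>t\<close>, so
  \<open>euler_polygon f h N x\<close> interpolates the Euler nodes linearly on \<open>[0, N h]\<close>.\<close>
definition euler_polygon :: "('a::real_vector \<Rightarrow> 'a) \<Rightarrow> real \<Rightarrow> nat \<Rightarrow> 'a \<Rightarrow> real \<Rightarrow> 'a" where
  "euler_polygon f h N x t = x + (\<Sum>i<N. ramp h (real i * h) t *\<^sub>R f (euler_node f h x i))"

lemma ramp_mono: "s \<le> t \<Longrightarrow> ramp h a s \<le> ramp h a t"
  by (auto simp: ramp_def)

lemma sum_ramp:
  assumes "h > 0" "t \<ge> 0"
  shows "(\<Sum>i<n. ramp h (real i * h) t) = min t (real n * h)"
  by (induction n) (use assms in \<open>auto simp: ramp_def min_def max_def algebra_simps\<close>)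

lemma ramp_at_node:
  assumes "h > 0"
  shows "ramp h (real i * h) (real j * h) = (if i < j then h else 0)"
proof (cases "i < j")
  case True
  then have "h \<le> real j * h - real i * h"
    using assms mult_right_mono[of 1 "real j - real i" h] by (simp add: left_diff_distrib)
  then show ?thesis using True assms by (simp add: ramp_def)
next
  case False
  then have "real j * h \<le> real i * h" using assms by (intro mult_right_mono) auto
  then show ?thesis using False by (simp add: ramp_def)
qed

lemma euler_polygon_0:
  assumes "h > 0"
  shows "euler_polygon f h N x 0 = x"
proof -
  have "ramp h (real i * h) 0 = 0" for i
  proof -
    have "0 \<le> real i * h" using assms by simp
    then show ?thesis by (simp add: ramp_def min_def max_def)
  qed
  then show ?thesis by (simp add: euler_polygon_def)
qed

lemma euler_polygon_node:
  assumes "h > 0" "j \<le> N"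
  shows "euler_polygon f h N x (real j * h) = euler_node f h x j"
proof -
  have nodes: "euler_node f h x j = x + (\<Sum>i<j. h *\<^sub>R f (euler_node f h x i))" for j
    by (induction j) (simp_all add: euler_node_def)
  have "(\<Sum>i<N. ramp h (real i * h) (real j * h) *\<^sub>R f (euler_node f h x i))
      = (\<Sum>i<N. if i < j then h *\<^sub>R f (euler_node f h x i) else 0)"
    by (intro sum.cong) (simp_all add: ramp_at_node[OF assms(1)])
  also have "\<dots> = (\<Sum>i\<in>{i\<in>{..<N}. i < j}. h *\<^sub>R f (euler_node f h x i))"
    by (rule sum.inter_filter[symmetric]) simp
  also have "{i\<in>{..<N}. i < j} = {..<j}" using assms(2) by auto
  finally show ?thesis by (simp add: euler_polygon_def nodes[of j])
qed

text \<open>Only the nodes \<open>i\<close> whose step \<open>[i h, (i+1) h]\<close> meets \<open>[a, b]\<close> contribute to the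
  increment over \<open>[a, b]\<close>.\<close>
lemma euler_polygon_increment:
  assumes h: "h > 0" and ab: "0 \<le> a" "a \<le> b" "b \<le> real N * h"
    and close: "\<And>i. i < N \<Longrightarrow> a - h < real i * h \<Longrightarrow> real i * h < b \<Longrightarrow>
                  norm (f (euler_node f h x i) - v) \<le> e"
  shows "norm (euler_polygon f h N x b - euler_polygon f h N x a - (b - a) *\<^sub>R v) \<le> e * (b - a)"
proof -
  define w where "w i = ramp h (real i * h) b - ramp h (real i * h) a" for i
  have w_nonneg: "0 \<le> w i" for i using ramp_mono[OF ab(2)] by (simp add: w_def)
  have sum_w: "(\<Sum>i<N. w i) = b - a"
    using sum_ramp[OF h, of b N] sum_ramp[OF h, of a N] ab by (simp add: w_def sum_subtractf)
  have "euler_polygon f h N x b - euler_polygon f h N x a - (b - a) *\<^sub>R v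
      = (\<Sum>i<N. w i *\<^sub>R (f (euler_node f h x i) - v))"
    unfolding sum_w[symmetric] scaleR_sum_left
    by (simp add: euler_polygon_def w_def sum_subtractf[symmetric] scaleR_diff_left scaleR_diff_right)
  also have "norm \<dots> \<le> (\<Sum>i<N. w i * e)"
  proof (rule order_trans[OF norm_sum sum_mono])
    fix i assume i: "i \<in> {..<N}"
    show "norm (w i *\<^sub>R (f (euler_node f h x i) - v)) \<le> w i * e"
    proof (cases "w i = 0")
      case False
      then have "ramp h (real i * h) a < ramp h (real i * h) b"
        using w_nonneg[of i] by (simp add: w_def)
      then have "a - h < real i * h" "real i * h < b"
        by (auto simp: ramp_def min_def max_def split: if_splits)
      then show ?thesis using close i w_nonneg by (simp add: mult_left_mono)
    qed simp
  qed
  also have "\<dots> = e * (b - a)"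
    unfolding sum_distrib_right[symmetric] sum_w by (rule mult.commute)
  finally show ?thesis .
qed

lemma euler_polygon_lipschitz:
  assumes "h > 0" "\<And>z. norm (f z) \<le> M" "0 \<le> M"
  shows "M-lipschitz_on {0..real N * h} (euler_polygon f h N x)"
proof (rule lipschitz_onI)
  have *: "dist (euler_polygon f h N x s) (euler_polygon f h N x t) \<le> M * dist s t"
    if "0 \<le> s" "s \<le> t" "t \<le> real N * h" for s t
    using euler_polygon_increment[OF assms(1) that, of f x 0 M] assms(2) that
    by (simp add: dist_norm norm_minus_commute)
  show "dist (euler_polygon f h N x s) (euler_polygon f h N x t) \<le> M * dist s t"
    if "s \<in> {0..real N * h}" "t \<in> {0..real N * h}" for s t
    using that *[of s t] *[of t s] by (cases "s \<le> t") (auto simp: dist_commute)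
qed (use assms in simp)

lemma euler_polygon_uniform_increments:
  fixes f :: "'a::real_normed_vector \<Rightarrow> 'a"
  assumes uc: "uniformly_continuous_on UNIV f" and bnd: "\<And>z. norm (f z) \<le> M" and "\<epsilon> > 0"
  obtains \<delta> where "\<delta> > 0"
    "\<And>h N x a b c. 0 < h \<Longrightarrow> h < \<delta> \<Longrightarrow> 0 \<le> a \<Longrightarrow> a \<le> c \<Longrightarrow> c \<le> b \<Longrightarrow> b \<le> real N * h \<Longrightarrow>
       b - a < \<delta> \<Longrightarrow> norm (euler_polygon f h N x b - euler_polygon f h N x a
                              - (b - a) *\<^sub>R f (euler_polygon f h N x c)) \<le> \<epsilon> * (b - a)"
proof -
  obtain d where d: "d > 0" "\<And>z w. dist w z < d \<Longrightarrow> dist (f w) (f z) < \<epsilon>"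
    using uc \<open>\<epsilon> > 0\<close> unfolding uniformly_continuous_on_def by (meson UNIV_I)
  have M: "0 \<le> M" by (rule order_trans[OF norm_ge_zero bnd])
  define \<delta> where "\<delta> = d / (2 * (M + 1))"
  have "\<delta> > 0" using d M by (simp add: \<delta>_def)
  moreover
  have "norm (euler_polygon f h N x b - euler_polygon f h N x a
              - (b - a) *\<^sub>R f (euler_polygon f h N x c)) \<le> \<epsilon> * (b - a)"
    if h: "0 < h" "h < \<delta>" and abc: "0 \<le> a" "a \<le> c" "c \<le> b" "b \<le> real N * h" "b - a < \<delta>"
    for h N x a b c
  proof (rule euler_polygon_increment[OF h(1) abc(1) _ abc(4)])
    fix i assume i: "i < N" "a - h < real i * h" "real i * h < b"
    let ?\<phi> = "euler_polygon f h N x"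
    have "M-lipschitz_on {0..real N * h} ?\<phi>" by (rule euler_polygon_lipschitz[OF h(1) bnd M])
    then have "dist (?\<phi> (real i * h)) (?\<phi> c) \<le> M * dist (real i * h) c"
      using h i abc by (intro lipschitz_onD) (auto intro: mult_right_mono)
    also have "\<dots> \<le> (M + 1) * dist (real i * h) c" by (simp add: mult_right_mono)
    also have "\<dots> < (M + 1) * (2 * \<delta>)"
      using i abc h M by (intro mult_strict_left_mono) (auto simp: dist_real_def)
    also have "\<dots> = d" using M by (simp add: \<delta>_def field_simps)
    finally have "dist (euler_node f h x i) (?\<phi> c) < d"
      using euler_polygon_node[OF h(1), of i N f x] i by simp
    then show "norm (f (euler_node f h x i) - f (?\<phi> c)) \<le> \<epsilon>"
      using d(2) by (fastforce simp: dist_norm)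
  qed (use abc in auto)
  ultimately show ?thesis using that by blast
qed

section \<open>Peano's existence theorem\<close>

lemma has_vector_derivative_of_uniform_increments:
  fixes g v :: "real \<Rightarrow> 'a::real_normed_vector"
  assumes incr: "\<And>\<epsilon>. \<epsilon> > 0 \<Longrightarrow> \<exists>\<delta>>0. \<forall>a\<in>S. \<forall>b\<in>S. \<forall>c\<in>{a..b}. b - a < \<delta> \<longrightarrow>
                    norm (g b - g a - (b - a) *\<^sub>R v c) \<le> \<epsilon> * (b - a)"
    and t: "t \<in> S"
  shows "(g has_vector_derivative v t) (at t within S)"
  unfolding has_vector_derivative_def has_derivative_within_alt
proof (intro conjI allI impI bounded_linear_scaleR_left)
  fix \<epsilon> :: real assume "\<epsilon> > 0"
  then obtain \<delta> where \<delta>: "\<delta> > 0" and H: "\<forall>a\<in>S. \<forall>b\<in>S. \<forall>c\<in>{a..b}. b - a < \<delta> \<longrightarrow>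
                    norm (g b - g a - (b - a) *\<^sub>R v c) \<le> \<epsilon> * (b - a)"
    using incr by blast
  have "norm (g y - g t - (y - t) *\<^sub>R v t) \<le> \<epsilon> * norm (y - t)"
    if y: "y \<in> S" "norm (y - t) < \<delta>" for y
  proof (cases "t \<le> y")
    case True
    then show ?thesis using H t y by auto
  next
    case False
    have "norm (g t - g y - (t - y) *\<^sub>R v t) \<le> \<epsilon> * (t - y)"
      using H t y False by auto
    moreover have "g y - g t - (y - t) *\<^sub>R v t = - (g t - g y - (t - y) *\<^sub>R v t)"
      by (simp add: algebra_simps)
    ultimately show ?thesis using False by (simp only: norm_minus_cancel) simp
  qed
  then show "\<exists>\<delta>>0. \<forall>y\<in>S. norm (y - t) < \<delta> \<longrightarrow> norm (g y - g t - (y - t) *\<^sub>R v t) \<le> \<epsilon> * norm (y - t)"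
    using \<delta> by blast
qed

text \<open>Peano's theorem via Euler polygons: the polygons with step \<open>T / (n+1)\<close> are uniformly
  bounded and equi-Lipschitz, so Arzela-Ascoli yields a uniformly convergent subsequence, and the
  increment estimate of the polygons passes to the limit.\<close>
lemma peano_existence_bounded:
  fixes f :: "'a::euclidean_space \<Rightarrow> 'a"
  assumes uc: "uniformly_continuous_on UNIV f" and bnd: "\<And>z. norm (f z) \<le> M" and T: "T > 0"
  obtains g where "g 0 = x" "M-lipschitz_on {0..T} g"
    "\<And>t. t \<in> {0..T} \<Longrightarrow> (g has_vector_derivative f (g t)) (at t within {0..T})"
proof -
  define h where "h n = T / real (Suc n)" for n
  define \<phi> where "\<phi> n = euler_polygon f (h n) (Suc n) x" for n
  have h: "h n > 0" "real (Suc n) * h n = T" for n using T by (simp_all add: h_def)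
  have M: "0 \<le> M" by (rule order_trans[OF norm_ge_zero bnd])
  have lip: "M-lipschitz_on {0..T} (\<phi> n)" for n
    using euler_polygon_lipschitz[where f = f and N = "Suc n" and x = x, OF h(1)[of n] bnd M]
    unfolding h(2) \<phi>_def .
  have \<phi>0: "\<phi> n 0 = x" for n by (simp add: \<phi>_def euler_polygon_0[OF h(1)])
  have "norm (\<phi> n t) \<le> norm x + M * T" if "t \<in> {0..T}" for n t
  proof -
    have "norm (\<phi> n t - \<phi> n 0) \<le> M * T"
      using lipschitz_on_normD[OF lip, of t 0] that M by (auto intro: order_trans mult_left_mono)
    then show ?thesis using norm_triangle_sub[of "\<phi> n t" x] by (simp add: \<phi>0)
  qed
  moreover have "\<exists>d>0. \<forall>n s. s \<in> {0..T} \<and> norm (t - s) < d \<longrightarrow> norm (\<phi> n t - \<phi> n s) < e"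
    if "t \<in> {0..T}" "e > 0" for t e
  proof (intro exI[of _ "e / (M + 1)"] conjI allI impI)
    fix n s assume s: "s \<in> {0..T} \<and> norm (t - s) < e / (M + 1)"
    have "norm (\<phi> n t - \<phi> n s) \<le> M * norm (t - s)" using lipschitz_on_normD[OF lip] s that by blast
    also have "\<dots> \<le> (M + 1) * norm (t - s)" by (simp add: mult_right_mono)
    also have "\<dots> < e" using s M by (simp add: field_simps)
    finally show "norm (\<phi> n t - \<phi> n s) < e" .
  qed (use that M in simp)
  ultimately obtain g r where r: "strict_mono (r :: nat \<Rightarrow> nat)"
    and unif: "\<And>e. 0 < e \<Longrightarrow> \<exists>N. \<forall>n t. n \<ge> N \<and> t \<in> {0..T} \<longrightarrow> norm (\<phi> (r n) t - g t) < e"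
    using Arzela_Ascoli[of "{0..T}" \<phi> "norm x + M * T"] by (metis compact_Icc)
  have lim: "(\<lambda>n. \<phi> (r n) t) \<longlonglongrightarrow> g t" if "t \<in> {0..T}" for t
    unfolding lim_sequentially dist_norm using unif that by meson
  have "g 0 = x"
    using lim[of 0] T by (simp add: \<phi>0 LIMSEQ_const_iff)
  moreover have "M-lipschitz_on {0..T} g"
  proof (rule lipschitz_onI)
    fix s t assume st: "s \<in> {0..T}" "t \<in> {0..T}"
    show "dist (g s) (g t) \<le> M * dist s t"
      by (rule LIMSEQ_le_const2[OF tendsto_dist[OF lim[OF st(1)] lim[OF st(2)]]])
         (use lipschitz_onD[OF lip st] in blast)
  qed (rule M)
  moreover have "(g has_vector_derivative f (g t)) (at t within {0..T})" if "t \<in> {0..T}" for t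
  proof (rule has_vector_derivative_of_uniform_increments[OF _ that])
    fix \<epsilon> :: real assume "\<epsilon> > 0"
    then obtain \<delta> where \<delta>: "\<delta> > 0" and incr: "\<And>h N x a b c. 0 < h \<Longrightarrow> h < \<delta> \<Longrightarrow> 0 \<le> a \<Longrightarrow>
       a \<le> c \<Longrightarrow> c \<le> b \<Longrightarrow> b \<le> real N * h \<Longrightarrow> b - a < \<delta> \<Longrightarrow>
       norm (euler_polygon f h N x b - euler_polygon f h N x a
              - (b - a) *\<^sub>R f (euler_polygon f h N x c)) \<le> \<epsilon> * (b - a)"
      using euler_polygon_uniform_increments[OF uc bnd] by metis
    obtain N :: nat where N: "T / \<delta> < real N" using reals_Archimedean2 by blast
    have small: "h (r n) < \<delta>" if "n \<ge> N" for n
    proof -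
      have "T / \<delta> < real (Suc (r n))" using N seq_suble[OF r, of n] that by linarith
      then show ?thesis using \<delta> by (simp add: h_def field_simps)
    qed
    have "norm (g b - g a - (b - a) *\<^sub>R f (g c)) \<le> \<epsilon> * (b - a)"
      if ab: "a \<in> {0..T}" "b \<in> {0..T}" "c \<in> {a..b}" "b - a < \<delta>" for a b c
    proof (rule LIMSEQ_le_const2)
      have "isCont f z" for z
        using uniformly_continuous_imp_continuous[OF uc] by (simp add: continuous_on_eq_continuous_at)
      then show "(\<lambda>n. norm (\<phi> (r n) b - \<phi> (r n) a - (b - a) *\<^sub>R f (\<phi> (r n) c))) \<longlonglongrightarrow>
                 norm (g b - g a - (b - a) *\<^sub>R f (g c))"
        using ab by (intro tendsto_intros lim isCont_tendsto_compose[where g = f]) auto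
      have "norm (\<phi> (r n) b - \<phi> (r n) a - (b - a) *\<^sub>R f (\<phi> (r n) c)) \<le> \<epsilon> * (b - a)"
        if "n \<ge> N" for n
        unfolding \<phi>_def by (rule incr[OF h(1) small[OF that]]) (use ab h(2)[of "r n"] in auto)
      then show "\<exists>N. \<forall>n\<ge>N. norm (\<phi> (r n) b - \<phi> (r n) a - (b - a) *\<^sub>R f (\<phi> (r n) c)) \<le> \<epsilon> * (b - a)"
        by blast
    qed
    then show "\<exists>\<delta>>0. \<forall>a\<in>{0..T}. \<forall>b\<in>{0..T}. \<forall>c\<in>{a..b}. b - a < \<delta> \<longrightarrow>
                 norm (g b - g a - (b - a) *\<^sub>R f (g c)) \<le> \<epsilon> * (b - a)"
      using \<delta> by blast
  qed
  ultimately show ?thesis using that by blast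
qed

text \<open>Precomposing \<open>f\<close> with the projection onto the ball makes it bounded and uniformly
  continuous; the resulting solution stays in the ball, where the modification is invisible.\<close>
lemma peano_local_existence:
  fixes f :: "'a::euclidean_space \<Rightarrow> 'a"
  assumes f_cont: "continuous_on (cball x r) f" and r: "r > 0"
  obtains T M g where "T > 0" "g 0 = x" "M-lipschitz_on {0..T} g" "g ` {0..T} \<subseteq> cball x r"
    "\<And>t. t \<in> {0..T} \<Longrightarrow> (g has_vector_derivative f (g t)) (at t within {0..T})"
proof -
  define P where "P = closest_point (cball x r)"
  have P_in: "P z \<in> cball x r" for z
    unfolding P_def using r by (intro closest_point_in_set) auto
  have "uniformly_continuous_on UNIV P"
    unfolding P_def using closest_point_lipschitz[of "cball x r"] r
    by (intro lipschitz_on_uniformly_continuous[of 1] lipschitz_onI) auto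
  moreover have "uniformly_continuous_on (P ` UNIV) f"
    using compact_uniformly_continuous[OF f_cont compact_cball] P_in
    unfolding uniformly_continuous_on_def by blast
  ultimately have uc: "uniformly_continuous_on UNIV (\<lambda>z. f (P z))"
    by (rule uniformly_continuous_on_compose)
  obtain M where M: "\<And>z. z \<in> cball x r \<Longrightarrow> norm (f z) \<le> M" "M \<ge> 0"
    using compact_imp_bounded[OF compact_continuous_image[OF f_cont compact_cball]]
    by (metis bounded_iff image_eqI norm_ge_zero order_trans)
  define T where "T = r / (M + 1)"
  have T: "T > 0" "M * T \<le> r" using r M by (simp_all add: T_def field_simps)
  obtain g where g: "g 0 = x" "M-lipschitz_on {0..T} g"
    and g': "\<And>t. t \<in> {0..T} \<Longrightarrow> (g has_vector_derivative f (P (g t))) (at t within {0..T})"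
    using peano_existence_bounded[OF uc _ T(1), of M x] M P_in by auto
  have g_in: "g t \<in> cball x r" if "t \<in> {0..T}" for t
  proof -
    have "dist (g 0) (g t) \<le> M * dist 0 t"
      by (rule lipschitz_onD[OF g(2) _ that]) (use T in simp)
    also have "\<dots> \<le> M * T" using that M by (intro mult_left_mono) auto
    finally show ?thesis using T g(1) by simp
  qed
  moreover have "f (P (g t)) = f (g t)" if "t \<in> {0..T}" for t
    using closest_point_self[OF g_in[OF that]] by (simp add: P_def)
  ultimately show ?thesis using that[OF T(1) g] g' by fastforce
qed

section \<open>Solutions of the differential inclusion\<close>

text \<open>With \<open>p\<close>, \<open>p0\<close> the projections of \<open>\<eta>\<close> onto \<open>F y\<close>, \<open>F y0\<close>: lower semicontinuity makes
  \<open>dist \<eta> p\<close> at most slightly larger than \<open>dist \<eta> p0\<close>, upper semicontinuity puts \<open>p\<close> near some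
  \<open>w \<in> F y0\<close>, and the obtuse angle at \<open>p0\<close> between \<open>\<eta>\<close> and \<open>w\<close> then forces \<open>w\<close> close to \<open>p0\<close>.\<close>
lemma continuous_on_closest_point_values:
  fixes F :: "'a::metric_space \<Rightarrow> 'b::euclidean_space set"
  assumes F_cont: "continuous_set_valued_map F"
    and F_ne: "\<And>x. F x \<noteq> {}" and F_closed: "\<And>x. closed (F x)" and F_convex: "\<And>x. convex (F x)"
  shows "continuous_on UNIV (\<lambda>y. closest_point (F y) \<eta>)"
  unfolding continuous_on_iff
proof (intro ballI allI impI)
  fix y0 :: 'a and \<epsilon> :: real assume "\<epsilon> > 0"
  define p0 where "p0 = closest_point (F y0) \<eta>"
  define d0 where "d0 = dist \<eta> p0"
  have d0: "d0 \<ge> 0" by (simp add: d0_def)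
  have p0F: "p0 \<in> F y0" unfolding p0_def by (rule closest_point_in_set[OF F_closed F_ne])
  define \<rho> where "\<rho> = min (\<epsilon> / 2) (min 1 (\<epsilon>\<^sup>2 / (16 * (d0 + 1))))"
  have \<rho>: "\<rho> > 0" "\<rho> \<le> \<epsilon> / 2" "\<rho> \<le> 1" "\<rho> \<le> \<epsilon>\<^sup>2 / (16 * (d0 + 1))"
    using \<open>\<epsilon> > 0\<close> d0 unfolding \<rho>_def by (auto simp del: divide_const_simps)
  obtain d1 where d1: "d1 > 0" "\<And>y. dist y y0 < d1 \<Longrightarrow> F y \<inter> ball p0 \<rho> \<noteq> {}"
    using F_cont p0F \<rho>(1) unfolding continuous_set_valued_map_def lower_semicontinuous_map_def
    by (metis centre_in_ball disjoint_iff open_ball)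
  obtain d2 where d2: "d2 > 0" "\<And>y. dist y y0 < d2 \<Longrightarrow> F y \<subseteq> (\<Union>w\<in>F y0. ball w \<rho>)"
    using F_cont \<rho>(1) unfolding continuous_set_valued_map_def upper_semicontinuous_map_def
    by (metis (no_types, lifting) UN_I centre_in_ball open_UN open_ball subsetI)
  have "dist (closest_point (F y) \<eta>) p0 < \<epsilon>" if y: "dist y y0 < d1" "dist y y0 < d2" for y
  proof -
    define p where "p = closest_point (F y) \<eta>"
    have pF: "p \<in> F y" unfolding p_def by (rule closest_point_in_set[OF F_closed F_ne])
    obtain q where q: "q \<in> F y" "dist p0 q < \<rho>" using d1(2)[OF y(1)] by auto
    obtain w where w: "w \<in> F y0" "dist w p < \<rho>" using d2(2)[OF y(2)] pF by auto
    have "dist \<eta> p \<le> dist \<eta> q" unfolding p_def by (rule closest_point_le[OF F_closed q(1)])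
    also have "\<dots> \<le> d0 + dist p0 q" unfolding d0_def by (rule dist_triangle)
    finally have "dist \<eta> w < d0 + 2 * \<rho>"
      using dist_triangle[of \<eta> w p] w(2) q(2) by (simp add: dist_commute)
    then have "(norm (\<eta> - w))\<^sup>2 < (d0 + 2 * \<rho>)\<^sup>2"
      by (intro power_strict_mono) (auto simp: dist_norm)
    moreover have "(norm (\<eta> - w))\<^sup>2 = d0\<^sup>2 - 2 * inner (\<eta> - p0) (w - p0) + (norm (w - p0))\<^sup>2"
      unfolding d0_def dist_norm power2_norm_eq_inner by (simp add: algebra_simps inner_commute)
    moreover have "inner (\<eta> - p0) (w - p0) \<le> 0"
      unfolding p0_def by (rule closest_point_dot[OF F_convex F_closed w(1)])
    ultimately have "(norm (w - p0))\<^sup>2 < 4 * \<rho> * (d0 + \<rho>)"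
      by (simp add: power2_eq_square algebra_simps)
    also have "\<dots> \<le> 4 * (\<epsilon>\<^sup>2 / (16 * (d0 + 1))) * (d0 + 1)"
      using \<rho> d0 by (intro mult_mono) auto
    also have "\<dots> = (\<epsilon> / 2)\<^sup>2" using d0 by (simp add: power2_eq_square field_simps)
    finally have "norm (w - p0) < \<epsilon> / 2"
      by (rule power_less_imp_less_base) (use \<open>\<epsilon> > 0\<close> in simp)
    then show ?thesis
      using dist_triangle[of p p0 w] w(2) \<rho>(2) dist_norm[of w p0]
      by (simp add: p_def dist_commute)
  qed
  then show "\<exists>d>0. \<forall>y\<in>UNIV. dist y y0 < d \<longrightarrow> dist (closest_point (F y) \<eta>) (closest_point (F y0) \<eta>) < \<epsilon>"
    using d1 d2 by (intro exI[of _ "min d1 d2"]) (auto simp: p0_def)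
qed

lemma lipschitz_on_imp_absolutely_continuous_on:
  fixes f :: "real \<Rightarrow> 'a::real_normed_vector"
  assumes "M-lipschitz_on S f"
  shows "absolutely_continuous_on S f"
  unfolding absolutely_continuous_on_def
proof (intro allI impI)
  fix e :: real assume "e > 0"
  have M: "M \<ge> 0" using lipschitz_on_nonneg[OF assms] .
  have "(\<Sum>(u, v)\<in>D. norm (f v - f u)) < e"
    if D: "\<forall>(u, v)\<in>D. u \<le> v \<and> {u..v} \<subseteq> S" "(\<Sum>(u, v)\<in>D. v - u) < e / (M + 1)" for D
  proof -
    have "(\<Sum>(u, v)\<in>D. norm (f v - f u)) \<le> (\<Sum>(u, v)\<in>D. (M + 1) * (v - u))"
    proof (intro sum_mono, clarify)
      fix u v assume "(u, v) \<in> D"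
      then have "u \<le> v" "{u..v} \<subseteq> S" using D(1) by auto
      then have uv: "u \<le> v" "u \<in> S" "v \<in> S" by auto
      then have "norm (f v - f u) \<le> M * (v - u)"
        using lipschitz_on_normD[OF assms uv(3,2)] by simp
      also have "\<dots> \<le> (M + 1) * (v - u)" using uv by (simp add: mult_right_mono)
      finally show "norm (f v - f u) \<le> (M + 1) * (v - u)" .
    qed
    also have "\<dots> = (M + 1) * (\<Sum>(u, v)\<in>D. v - u)"
      by (simp add: sum_distrib_left case_prod_unfold)
    also have "\<dots> < e" using D(2) M by (simp add: field_simps)
    finally show ?thesis .
  qed
  then show "\<exists>d>0. \<forall>D. finite D \<and> (\<forall>(u, v)\<in>D. u \<le> v \<and> {u..v} \<subseteq> S) \<and>
      (\<forall>p\<in>D. \<forall>q\<in>D. p \<noteq> q \<longrightarrow> {fst p<..<snd p} \<inter> {fst q<..<snd q} = {}) \<and>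
      (\<Sum>(u, v)\<in>D. v - u) < d \<longrightarrow> (\<Sum>(u, v)\<in>D. norm (f v - f u)) < e"
    using \<open>e > 0\<close> M by (intro exI[of _ "e / (M + 1)"]) auto
qed

lemma is_solution_on_Icc:
  assumes T: "0 \<le> T" and lip: "M-lipschitz_on {0..T} g"
    and g': "\<And>t. t \<in> {0..T} \<Longrightarrow> (g has_vector_derivative v t) (at t within {0..T})"
    and v: "\<And>t. t \<in> {0..T} \<Longrightarrow> v t \<in> F (g t)"
  shows "is_solution F {0..T} g"
  unfolding is_solution_def
proof (intro conjI)
  show "locally_absolutely_continuous_on {0..T} g"
    unfolding locally_absolutely_continuous_on_def
    using lipschitz_on_imp_absolutely_continuous_on lipschitz_on_subset[OF lip] by blast
  text \<open>Only the endpoints, a null set, lack a two-sided derivative.\<close>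
  show "AE t in lebesgue. t \<in> {0..T} \<longrightarrow> (\<exists>w. (g has_vector_derivative w) (at t) \<and> w \<in> F (g t))"
  proof (rule AE_I'[of "{0, T}"])
    show "{t \<in> space lebesgue. \<not> (t \<in> {0..T} \<longrightarrow> (\<exists>w. (g has_vector_derivative w) (at t) \<and> w \<in> F (g t)))}
          \<subseteq> {0, T}"
    proof (rule subsetI, rule ccontr)
      fix t assume t: "t \<in> {t \<in> space lebesgue.
          \<not> (t \<in> {0..T} \<longrightarrow> (\<exists>w. (g has_vector_derivative w) (at t) \<and> w \<in> F (g t)))}" "t \<notin> {0, T}"
      then have "t \<in> {0..T}" "0 < t" "t < T" by auto
      then have "(g has_vector_derivative v t) (at t)"
        using g'[of t] by (simp add: at_within_Icc_at)
      then show False using t(1) v[of t] \<open>t \<in> {0..T}\<close> by blast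
    qed
  qed simp
qed (use T in auto)

lemma strict_increase_along_curve:
  fixes g :: "real \<Rightarrow> 'a::real_inner"
  assumes ab: "a < b"
    and g': "\<And>t. t \<in> {a..b} \<Longrightarrow> (g has_vector_derivative v t) (at t within {a..b})"
    and B': "\<And>y. (B has_derivative (\<lambda>h. D y \<bullet> h)) (at y)"
    and pos: "\<And>t. t \<in> {a<..<b} \<Longrightarrow> D (g t) \<bullet> v t > 0"
  shows "B (g a) < B (g b)"
proof -
  have "((\<lambda>s. B (g s)) has_derivative (\<lambda>s. s * (D (g t) \<bullet> v t))) (at t within {a..b})"
    if "a \<le> t" "t \<le> b" for t
    using has_derivative_compose[OF g'[unfolded has_vector_derivative_def] B'] that by simp
  then obtain t where t: "t \<in> {a<..<b}" and "B (g b) - B (g a) = (b - a) * (D (g t) \<bullet> v t)"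
    using mvt_simple[OF ab, of "\<lambda>s. B (g s)" "\<lambda>t s. s * (D (g t) \<bullet> v t)"] by auto
  moreover have "0 < (b - a) * (D (g t) \<bullet> v t)" using pos[OF t] ab by simp
  ultimately show ?thesis by simp
qed

theorem lemma17:
  fixes F :: "real^'n \<Rightarrow> (real^'n) set"
    and Om :: "(real^'n) set"
    and B :: "real^'n \<Rightarrow> real"
    and gradB :: "real^'n \<Rightarrow> real^'n"
  assumes F_cont: "continuous_set_valued_map F"
    and F_ne: "\<And>x. F x \<noteq> {}"
    and F_compact: "\<And>x. compact (F x)"
    and F_convex: "\<And>x. convex (F x)"
    and O_open: "open Om"
    and B_deriv: "\<And>x. (B has_derivative (\<lambda>h. gradB x \<bullet> h)) (at x)"
    and gradB_cont: "continuous_on UNIV gradB"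
    and mono: "\<And>I \<phi>. is_solution F I \<phi> \<Longrightarrow> \<phi> ` I \<subseteq> Om \<Longrightarrow>
                 (\<forall>s\<in>I. \<forall>t\<in>I. s \<le> t \<longrightarrow> B (\<phi> t) \<le> B (\<phi> s))"
  shows "\<forall>x\<in>Om. \<forall>\<eta>\<in>F x. gradB x \<bullet> \<eta> \<le> 0"
proof (rule ccontr)
  assume "\<not> ?thesis"
  then obtain x \<eta> where x: "x \<in> Om" "\<eta> \<in> F x" and pos: "gradB x \<bullet> \<eta> > 0"
    by (auto simp: not_le)
  have F_closed: "closed (F y)" for y using F_compact compact_imp_closed by blast
  define sel where "sel y = closest_point (F y) \<eta>" for y
  have sel_cont: "continuous_on UNIV sel"
    unfolding sel_def by (rule continuous_on_closest_point_values[OF F_cont F_ne F_closed F_convex])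
  have sel_F: "sel y \<in> F y" for y unfolding sel_def by (rule closest_point_in_set[OF F_closed F_ne])
  have "open ({y. 0 < gradB y \<bullet> sel y} \<inter> Om)"
    by (intro open_Int open_Collect_less continuous_on_inner gradB_cont sel_cont continuous_on_const O_open)
  moreover have "x \<in> {y. 0 < gradB y \<bullet> sel y} \<inter> Om"
    using x pos by (simp add: sel_def closest_point_self)
  ultimately obtain r where r: "r > 0" "cball x r \<subseteq> {y. 0 < gradB y \<bullet> sel y} \<inter> Om"
    using open_contains_cball by blast
  obtain T M g where T: "T > 0" and g: "g 0 = x" "M-lipschitz_on {0..T} g" "g ` {0..T} \<subseteq> cball x r"
    and g': "\<And>t. t \<in> {0..T} \<Longrightarrow> (g has_vector_derivative sel (g t)) (at t within {0..T})"
    using peano_local_existence[OF continuous_on_subset[OF sel_cont subset_UNIV] r(1)] by metis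
  have "is_solution F {0..T} g"
    using is_solution_on_Icc[OF _ g(2) g' sel_F] T by simp
  moreover have g_in: "g t \<in> {y. 0 < gradB y \<bullet> sel y} \<inter> Om" if "t \<in> {0..T}" for t
    using g(3) r(2) that by blast
  ultimately have "B (g T) \<le> B (g 0)"
    using mono[of "{0..T}" g] T by fastforce
  moreover have "B (g 0) < B (g T)"
    using strict_increase_along_curve[OF T g' B_deriv] g_in by simp
  ultimately show False by simp
qed

end
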